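(* Let $A\in\mathbb{R}^{n\times n}$, $B\in\mathbb{R}^{n\times m}$, $N\geq 1$ an integer, $\Omega=\{x\in\mathbb{R}^n: Hx\leq h\}$ with $H\in\mathbb{R}^{n_h\times n}$, $h\in\mathbb{R}^{n_h}$, and $U=\{v\in\mathbb{R}^m: Gv\leq g\}$ with $G\in\mathbb{R}^{n_g\times m}$, $g\in\mathbb{R}^{n_g}$. Suppose $0\in\Omega$ and $0\in U$. For $k\geq 1$ let $$Q_k(\Omega,U)=\Big\{x\in\mathbb{R}^n:\ \exists\, u_1,\dots,u_k\in U \text{ with } A^k x+\sum_{i=0}^{k-1}A^{k-1-i}Bu_{k-i}\in\Omega\Big\},$$ and $\bar{Q}_N(\Omega,U)=\mathrm{co}\big(\bigcup_{k=1}^N Q_k(\Omega,U)\big)$. Set $\bar{n}=n+Nm$, $n_{\bar g}=n_h+Nn_g$ and $$\bar{G}=\begin{bmatrix} HA^N & HB & HAB & \cdots & HA^{N-1}B\\ 0 & G & 0 & \cdots & 0\\ 0 & 0 & G & \cdots & 0\\ \vdots & & & \ddots & \vdots\\ 0 & 0 & 0 & \cdots & G\end{bmatrix}\in\mathbb{R}^{n_{\bar g}\times\bar n},\quad \bar g=\begin{bmatrix}h\\ g\\ \vdots\\ g\end{bmatrix}\in\mathbb{R}^{n_{\bar g}},\quad \bar H=\begin{bmatrix}H & 0 & \cdots & 0\end{bmatrix}\in\mathbb{R}^{n_h\times\bar n}$$ (with $g$ repeated $N$ times in $\bar g$). If there exist a nonnegative (entrywise) matrix $T\in\mathbb{R}^{n_{\bar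 g}\times n_h}$ and a matrix $M\in\mathbb{R}^{\bar n\times\bar n}$ such that $$T\bar H=\bar G M,\qquad Th\leq \bar g,\qquad \begin{bmatrix}I & 0 & \cdots & 0\end{bmatrix}=\begin{bmatrix}I & 0&\cdots & 0\end{bmatrix}M$$ (where $\begin{bmatrix}I & 0 & \cdots & 0\end{bmatrix}\in\mathbb{R}^{n\times\bar n}$ with $I$ the $n\times n$ identity), then $\bar{Q}_N(\Omega,U)$ is a control invariant set for the system $x^+=Ax+Bu$ with input set $U$.
   Context: A set $C\subseteq\mathbb{R}^n$ is control invariant for $x^+=Ax+Bu$ with input constraint $u\in U$ if for every $x\in C$ there exists $u\in U$ with $Ax+Bu\in C$. Vector inequalities are componentwise; $\mathrm{co}$ denotes convex hull. *)

theory Defs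
  imports "HOL-Analysis.Analysis"
begin

text \<open>Vector inequalities use the componentwise
  order on real^'k. Matrix powers are defined explicitly (the ring power on
  real^'n^'n would be componentwise).\<close>

fun mpow :: "real^'n^'n \<Rightarrow> nat \<Rightarrow> real^'n^'n" where
  "mpow A 0 = mat 1"
| "mpow A (Suc k) = A ** mpow A k"

definition control_invariant ::
  "real^'n^'n \<Rightarrow> real^'m^'n \<Rightarrow> (real^'m) set \<Rightarrow> (real^'n) set \<Rightarrow> bool" where
  "control_invariant A B U C \<longleftrightarrow> (\<forall>x\<in>C. \<exists>u\<in>U. A *v x + B *v u \<in> C)"

text \<open>Q_k(Omega,U); the inputs u_1..u_k are the values u 1, ..., u k.\<close>
definition Qset ::
  "real^'n^'n \<Rightarrow> real^'m^'n \<Rightarrow> (real^'n) set \<Rightarrow> (real^'m) set \<Rightarrow> nat \<Rightarrow> (real^'n) set" where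
  "Qset A B \<Omega> U k = {x. \<exists>u :: nat \<Rightarrow> real^'m. (\<forall>i\<in>{1..k}. u i \<in> U) \<and>
      mpow A k *v x + (\<Sum>i=0..<k. (mpow A (k - 1 - i) ** B) *v u (k - i)) \<in> \<Omega>}"

definition Qbar ::
  "real^'n^'n \<Rightarrow> real^'m^'n \<Rightarrow> (real^'n) set \<Rightarrow> (real^'m) set \<Rightarrow> nat \<Rightarrow> (real^'n) set" where
  "Qbar A B \<Omega> U N = convex hull (\<Union>k\<in>{1..N}. Qset A B \<Omega> U k)"

end

theory Submission
  imports Defs
begin

text \<open>For x \<in> \<Omega> the feedback
  inputs u j = Mux j x satisfy the input constraints and steer x into \<Omega> in exactly N steps,
  because G (Mux j x) = Tu j (H x) \<le> Tu j h \<le> g and H (A^N x + \<Sum> A^(j-1) B u j) =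
  T0 (H x) \<le> T0 h \<le> h, using T \<ge> 0. Hence \<Omega> \<subseteq> Q_N. Every point of Q_k can be steered
  into Q_(k-1), where Q_0 = \<Omega>, so the union of Q_1, ..., Q_N is control invariant;
  as U is convex and the dynamics are linear, so is its convex hull.\<close>

lemma sum_matrix_vector_mult: "(\<Sum>j\<in>S. (M j :: real^'a^'b)) *v x = (\<Sum>j\<in>S. M j *v x)"
  by (induction S rule: infinite_finite_induct) (auto simp: matrix_vector_mult_add_rdistrib)

lemma matrix_vector_mult_sum: "(M :: real^'a^'b) *v (\<Sum>j\<in>S. v j) = (\<Sum>j\<in>S. M *v v j)"
  by (induction S rule: infinite_finite_induct) (auto simp: matrix_vector_right_distrib)

lemma nonneg_matrix_vector_mult_mono:
  fixes T :: "real^'a^'b"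
  assumes "\<forall>i j. T $ i $ j \<ge> 0" and "a \<le> b"
  shows "T *v a \<le> T *v b"
  using assms unfolding less_eq_vec_def matrix_vector_mult_def
  by (auto intro!: sum_mono mult_left_mono)

lemma convex_polyhedron: "convex {v. (G :: real^'a^'b) *v v \<le> g}"
proof (rule convexI)
  fix x y :: "real^'a" and a b :: real
  assume x: "x \<in> {v. G *v v \<le> g}" and y: "y \<in> {v. G *v v \<le> g}"
    and ab: "0 \<le> a" "0 \<le> b" "a + b = 1"
  have "G *v (a *\<^sub>R x + b *\<^sub>R y) = a *\<^sub>R (G *v x) + b *\<^sub>R (G *v y)"
    by (simp add: matrix_vector_right_distrib matrix_vector_mult_scaleR)
  also have "\<dots> \<le> a *\<^sub>R g + b *\<^sub>R g"
    using x y ab unfolding less_eq_vec_def by (auto intro!: add_mono mult_left_mono)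
  also have "\<dots> = g"
    using ab by (metis scaleR_add_left scaleR_one)
  finally show "a *\<^sub>R x + b *\<^sub>R y \<in> {v. G *v v \<le> g}" by simp
qed

lemma mpow_Suc_right: "mpow A (Suc k) = mpow A k ** A"
  by (induction k) (simp_all add: matrix_mul_assoc)

lemma control_invariant_convex_hull:
  fixes A :: "real^'n^'n" and B :: "real^'m^'n"
  assumes "convex U" and "\<forall>y\<in>S. \<exists>u\<in>U. A *v y + B *v u \<in> S"
  shows "control_invariant A B U (convex hull S)"
  unfolding control_invariant_def
proof
  fix x assume x: "x \<in> convex hull S"
  obtain f where f: "\<forall>y\<in>S. f y \<in> U \<and> A *v y + B *v f y \<in> S"
    using assms(2) by metis
  \<comment> \<open>The state-input pairs that keep the hull invariant form a convex set containing the
    graph of f over S; projecting its convex hull to the state recovers the hull of S.\<close>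
  define K where "K = {p. snd p \<in> U} \<inter> (\<lambda>p. A *v fst p + B *v snd p) -` (convex hull S)"
  have "linear (\<lambda>p::(real^'n) \<times> (real^'m). A *v fst p + B *v snd p)"
    by (intro linear_compose_add
        linear_compose[OF linear_fst matrix_vector_mul_linear, unfolded o_def]
        linear_compose[OF linear_snd matrix_vector_mul_linear, unfolded o_def])
  moreover have "convex {p::(real^'n) \<times> (real^'m). snd p \<in> U}"
    using convex_linear_vimage[OF linear_snd assms(1)] by (simp add: vimage_def)
  ultimately have "convex K"
    unfolding K_def by (intro convex_Int convex_linear_vimage convex_convex_hull)
  moreover have "(\<lambda>y. (y, f y)) ` S \<subseteq> K"
    using f by (auto simp: K_def hull_inc)
  ultimately have "convex hull ((\<lambda>y. (y, f y)) ` S) \<subseteq> K"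
    by (simp add: hull_minimal)
  moreover have "fst ` (convex hull ((\<lambda>y. (y, f y)) ` S)) = convex hull S"
    using convex_hull_linear_image[OF linear_fst, of "(\<lambda>y. (y, f y)) ` S"]
    by (simp add: image_image)
  ultimately obtain p where "p \<in> K" "fst p = x"
    using x by force
  then show "\<exists>u\<in>U. A *v x + B *v u \<in> convex hull S"
    unfolding K_def by auto
qed

lemma Qset_0 [simp]: "Qset A B \<Omega> U 0 = \<Omega>"
  by (simp add: Qset_def)

lemma Qset_Suc_step:
  assumes "y \<in> Qset A B \<Omega> U (Suc k)"
  shows "\<exists>v\<in>U. A *v y + B *v v \<in> Qset A B \<Omega> U k"
proof -
  obtain u where u: "\<forall>i\<in>{1..Suc k}. u i \<in> U"
    "mpow A (Suc k) *v y + (\<Sum>i=0..<Suc k. (mpow A (Suc k - 1 - i) ** B) *v u (Suc k - i)) \<in> \<Omega>"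
    using assms unfolding Qset_def by blast
  \<comment> \<open>The first input u (Suc k) is applied now; the remaining ones witness membership in Q_k.\<close>
  have "mpow A k *v (A *v y + B *v u (Suc k)) + (\<Sum>i=0..<k. (mpow A (k - 1 - i) ** B) *v u (k - i))
      = mpow A (Suc k) *v y + (\<Sum>i=0..<Suc k. (mpow A (Suc k - 1 - i) ** B) *v u (Suc k - i))"
    unfolding sum.atLeast0_lessThan_Suc_shift
    by (simp add: mpow_Suc_right matrix_vector_right_distrib matrix_vector_mul_assoc
        del: mpow.simps(2))
  with u(2) have "mpow A k *v (A *v y + B *v u (Suc k))
      + (\<Sum>i=0..<k. (mpow A (k - 1 - i) ** B) *v u (k - i)) \<in> \<Omega>"
    by (simp only:)
  with u(1) have "A *v y + B *v u (Suc k) \<in> Qset A B \<Omega> U k"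
    unfolding Qset_def by (auto intro!: exI[of _ u])
  moreover have "u (Suc k) \<in> U"
    using u(1) by simp
  ultimately show ?thesis by blast
qed

lemma polyhedron_subset_Qset_feedback:
  fixes A :: "real^'n^'n" and B :: "real^'m^'n"
    and H :: "real^'n^'nh" and G :: "real^'m^'ng"
    and T0 :: "real^'nh^'nh" and Tu :: "nat \<Rightarrow> real^'nh^'ng" and K :: "nat \<Rightarrow> real^'n^'m"
  assumes T0_nonneg: "\<forall>i j. T0 $ i $ j \<ge> 0"
    and Tu_nonneg: "\<forall>k\<in>{1..N}. \<forall>i j. Tu k $ i $ j \<ge> 0"
    and state_block: "T0 ** H = H ** mpow A N + (\<Sum>j=1..N. H ** mpow A (j - 1) ** B ** K j)"
    and input_blocks: "\<forall>j\<in>{1..N}. Tu j ** H = G ** K j"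
    and T0_h: "T0 *v h \<le> h"
    and Tu_h: "\<forall>j\<in>{1..N}. Tu j *v h \<le> g"
  shows "{x. H *v x \<le> h} \<subseteq> Qset A B {x. H *v x \<le> h} {v. G *v v \<le> g} N"
proof
  fix x assume x: "x \<in> {x. H *v x \<le> h}"
  define u where "u j = K j *v x" for j
  have u_in_U: "\<forall>j\<in>{1..N}. u j \<in> {v. G *v v \<le> g}"
  proof
    fix j assume j: "j \<in> {1..N}"
    have "G *v u j = Tu j *v (H *v x)"
      using input_blocks j by (simp add: u_def matrix_vector_mul_assoc)
    also have "\<dots> \<le> Tu j *v h"
      using Tu_nonneg j x by (intro nonneg_matrix_vector_mult_mono) auto
    also have "\<dots> \<le> g"
      using Tu_h j by blast
    finally show "u j \<in> {v. G *v v \<le> g}" by simp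
  qed
  have reindex: "(\<Sum>i=0..<N. F (N - i)) = (\<Sum>j=1..N. F j)" for F :: "nat \<Rightarrow> real^'nh"
    by (rule sum.reindex_bij_witness[of _ "\<lambda>j. N - j" "\<lambda>i. N - i"]) auto
  have "H *v (mpow A N *v x + (\<Sum>i=0..<N. (mpow A (N - 1 - i) ** B) *v u (N - i)))
      = (H ** mpow A N) *v x + (\<Sum>i=0..<N. (H ** mpow A (N - 1 - i) ** B ** K (N - i)) *v x)"
    by (auto simp: matrix_vector_right_distrib matrix_vector_mult_sum matrix_vector_mul_assoc
        u_def matrix_mul_assoc intro!: sum.cong)
  also have "\<dots> = (T0 ** H) *v x"
    using reindex[of "\<lambda>j. (H ** mpow A (j - 1) ** B ** K j) *v x"]
    by (simp add: state_block matrix_vector_mult_add_rdistrib sum_matrix_vector_mult)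
  also have "\<dots> = T0 *v (H *v x)"
    by (simp add: matrix_vector_mul_assoc)
  also have "\<dots> \<le> T0 *v h"
    using T0_nonneg x by (intro nonneg_matrix_vector_mult_mono) auto
  also have "\<dots> \<le> h"
    by (rule T0_h)
  finally show "x \<in> Qset A B {x. H *v x \<le> h} {v. G *v v \<le> g} N"
    unfolding Qset_def using u_in_U by blast
qed

theorem theorem1:
  fixes A :: "real^'n^'n" and B :: "real^'m^'n"
    and H :: "real^'n^'nh" and h :: "real^'nh"
    and G :: "real^'m^'ng" and g :: "real^'ng"
    and N :: nat
    and T0 :: "real^'nh^'nh" and Tu :: "nat \<Rightarrow> real^'nh^'ng"
    and Mxx :: "real^'n^'n" and Mxu :: "nat \<Rightarrow> real^'m^'n"
    and Mux :: "nat \<Rightarrow> real^'n^'m" and Muu :: "nat \<Rightarrow> nat \<Rightarrow> real^'m^'m"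
  assumes N: "N \<ge> 1"
    and zero_Omega: "(0::real^'n) \<in> {x. H *v x \<le> h}"
    and zero_U: "(0::real^'m) \<in> {v. G *v v \<le> g}"
    \<comment> \<open>T = [T0; Tu 1; ...; Tu N] is entrywise nonnegative\<close>
    and T0_nonneg: "\<forall>i j. T0 $ i $ j \<ge> 0"
    and Tu_nonneg: "\<forall>k\<in>{1..N}. \<forall>i j. Tu k $ i $ j \<ge> 0"
    \<comment> \<open>T Hbar = Gbar M, written block by block, M = [[Mxx, Mxu j]; [Mux i, Muu i j]]\<close>
    and blk00: "T0 ** H = H ** mpow A N ** Mxx
                 + (\<Sum>j=1..N. H ** mpow A (j - 1) ** B ** Mux j)"
    and blk0l: "\<forall>l\<in>{1..N}. H ** mpow A N ** Mxu l
                 + (\<Sum>j=1..N. H ** mpow A (j - 1) ** B ** Muu j l) = 0"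
    and blki0: "\<forall>i\<in>{1..N}. Tu i ** H = G ** Mux i"
    and blkil: "\<forall>i\<in>{1..N}. \<forall>l\<in>{1..N}. G ** Muu i l = 0"
    \<comment> \<open>T h \<le> gbar\<close>
    and Th0: "T0 *v h \<le> h"
    and Thi: "\<forall>i\<in>{1..N}. Tu i *v h \<le> g"
    \<comment> \<open>[I 0 ... 0] = [I 0 ... 0] M\<close>
    and MI: "Mxx = mat 1"
    and M0: "\<forall>l\<in>{1..N}. Mxu l = 0"
  shows "control_invariant A B {v. G *v v \<le> g}
           (Qbar A B {x. H *v x \<le> h} {v. G *v v \<le> g} N)"
proof -
  let ?\<Omega> = "{x. H *v x \<le> h}" and ?U = "{v. G *v v \<le> g}"
  let ?S = "\<Union>k\<in>{1..N}. Qset A B ?\<Omega> ?U k"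
  have \<Omega>_sub: "?\<Omega> \<subseteq> Qset A B ?\<Omega> ?U N"
    using blk00 by (intro polyhedron_subset_Qset_feedback[OF T0_nonneg Tu_nonneg _ blki0 Th0 Thi])
      (simp add: MI)
  have "\<exists>u\<in>?U. A *v y + B *v u \<in> ?S" if "y \<in> ?S" for y
  proof -
    from that obtain k where k: "k \<in> {1..N}" "y \<in> Qset A B ?\<Omega> ?U (Suc (k - 1))"
      by auto
    then obtain u where "u \<in> ?U" "A *v y + B *v u \<in> Qset A B ?\<Omega> ?U (k - 1)"
      using Qset_Suc_step by blast
    moreover have "Qset A B ?\<Omega> ?U (k - 1) \<subseteq> ?S"
    proof (cases "k = 1")
      case True
      then show ?thesis using \<Omega>_sub N by auto
    next
      case False
      then have "k - 1 \<in> {1..N}" using k(1) by auto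
      then show ?thesis by blast
    qed
    ultimately show ?thesis by blast
  qed
  then show ?thesis
    unfolding Qbar_def by (intro control_invariant_convex_hull convex_polyhedron) blast
qed

end
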